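(* Let $m\ge 2$, $\gamma>0$ and $u>0$, and let $h\in\{N,S\}$. Let $\kappa\in\mathbb C$ with $k=|\kappa|>0$. Then there is $E_0=E_0(\gamma,u,k)>0$ such that the matrix $\hat H^h(\kappa)$ has no eigenvalue in the interval $(-E_0,E_0)$. Moreover, all eigenvalues of $\hat H^h(\kappa)$ are simple.
   Context: Let $\sigma_1,\sigma_2$ be the standard Pauli matrices and $A=\begin{pmatrix}0&0\\1&0\end{pmatrix}$. For a real number $v$ and $\kappa=k_x+ik_y\in\mathbb C$, let $\hat H(\kappa;v)$ be the $2m\times 2m$ Hermitian matrix written in $m\times m$ blocks of size $2\times2$ whose $j$-th diagonal block is $u_jI_2+\begin{pmatrix}0&\bar\kappa\\ \kappa&0\end{pmatrix}$ with $u_j=\frac{v}{m-1}\big(j-\frac{m+1}{2}\big)$, whose $(j,j+1)$ block is $\gamma A$ and whose $(j+1,j)$ block is $\gamma A^*$ for $1\le j\le m-1$, all other blocks being zero. Define $\hat H^N(\kappa)=\hat H(\kappa;u)$ and $\hat H^S(\kappa)=\hat H(\kappa;-u)$. *)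

theory Defs
  imports "Jordan_Normal_Form.Char_Poly" "HOL-Computational_Algebra.Polynomial"
begin

text \<open>Layer potentials u_j = v/(m-1) (j - (m+1)/2), with j = b+1 for a 0-based block index b.\<close>
definition layer_pot :: "nat \<Rightarrow> real \<Rightarrow> nat \<Rightarrow> real" where
  "layer_pot m v b = v / (real m - 1) * (real (b + 1) - (real m + 1) / 2)"

text \<open>The 2m x 2m matrix H(kappa; v), 0-based indices; row i lies in block i div 2,
  component i mod 2. Diagonal blocks u_j I + [[0, conj kappa],[kappa, 0]];
  (j,j+1) blocks gamma*A with A = [[0,0],[1,0]]; (j+1,j) blocks gamma*A^*.\<close>
definition Hhat :: "nat \<Rightarrow> real \<Rightarrow> complex \<Rightarrow> real \<Rightarrow> complex mat" where
  "Hhat m \<gamma> \<kappa> v = mat (2*m) (2*m) (\<lambda>(i, j).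
     let b = i div 2; a = i mod 2; b' = j div 2; a' = j mod 2 in
     if b = b' then
       (if a = a' then complex_of_real (layer_pot m v b)
        else if a = 0 then cnj \<kappa> else \<kappa>)
     else if b' = b + 1 then (if a = 1 \<and> a' = 0 then complex_of_real \<gamma> else 0)
     else if b = b' + 1 then (if a = 0 \<and> a' = 1 then complex_of_real \<gamma> else 0)
     else 0)"

definition HN :: "nat \<Rightarrow> real \<Rightarrow> real \<Rightarrow> complex \<Rightarrow> complex mat" where
  "HN m \<gamma> u \<kappa> = Hhat m \<gamma> \<kappa> u"

definition HS :: "nat \<Rightarrow> real \<Rightarrow> real \<Rightarrow> complex \<Rightarrow> complex mat" where
  "HS m \<gamma> u \<kappa> = Hhat m \<gamma> \<kappa> (- u)"

end

theory Submission
  imports Defs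
begin

(* The matrix Hhat is tridiagonal, so its characteristic polynomial is the last member p_2m of
   the three-term recurrence p_(n+2) = (x - d_(n+1)) p_(n+1) - w_n p_n, with real diagonal d and
   products w_n of opposite off-diagonal entries, alternately |kappa|^2 and gamma^2 > 0; in
   particular it depends on kappa only through k = |kappa|. For such a recurrence
   Im (p_(n+1)(z) * cnj (p_n(z))) has the sign of Im z, so all roots are real, and the Wronskian
   p_(n+1)' p_n - p_(n+1) p_n' is positive on the real line, so all roots are simple.
   At x = 0 the recurrence moves from block to block by a 2x2 transfer matrix T(u_j); since
   T(u)^T = T(-u) and u_(m+1-j) = -u_j, the pairing of the states after a and after b blocks
   only depends on a + b. Hence p_2m(0) is the squared norm of the state after m/2 blocks for
   even m, and a negative definite form in the state after (m-1)/2 blocks for odd m (where the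
   middle potential vanishes); either way it is nonzero. E0 is then the smallest modulus of a
   root of the two real polynomials for v = u and v = -u. *)

section \<open>Tridiagonal matrices and three-term recurrences\<close>

definition tridiag_mat :: "nat \<Rightarrow> (nat \<Rightarrow> 'a) \<Rightarrow> (nat \<Rightarrow> 'a) \<Rightarrow> (nat \<Rightarrow> 'a) \<Rightarrow> 'a::zero mat" where
  "tridiag_mat n d c b = mat n n (\<lambda>(i, j).
     if i = j then d i else if j = Suc i then c i else if i = Suc j then b j else 0)"

lemma tridiag_mat_carrier [simp]: "tridiag_mat n d c b \<in> carrier_mat n n"
  by (simp add: tridiag_mat_def)

lemma mat_delete_tridiag_mat_last: "mat_delete (tridiag_mat (Suc n) d c b) n n = tridiag_mat n d c b"
  by (rule eq_matI) (auto simp: tridiag_mat_def mat_delete_def)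

lemma det_tridiag_mat_Suc_Suc:
  fixes d c b :: "nat \<Rightarrow> 'a::comm_ring_1"
  shows "det (tridiag_mat (Suc (Suc n)) d c b)
    = d (Suc n) * det (tridiag_mat (Suc n) d c b) - b n * c n * det (tridiag_mat n d c b)"
proof -
  let ?A = "tridiag_mat (Suc (Suc n)) d c b"
  let ?B = "mat_delete ?A (Suc n) n"
  have B: "?B \<in> carrier_mat (Suc n) (Suc n)"
    using mat_delete_carrier[OF tridiag_mat_carrier[of "Suc (Suc n)" d c b]] by simp
  have minor: "mat_delete ?B n n = tridiag_mat n d c b"
    by (rule eq_matI) (auto simp: tridiag_mat_def mat_delete_def)
  have "det ?B = (\<Sum>i<Suc n. ?B $$ (i, n) * cofactor ?B i n)"
    by (rule laplace_expansion_column[OF B]) simp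
  also have "\<dots> = ?B $$ (n, n) * cofactor ?B n n"
    by (subst sum.lessThan_Suc) (auto intro!: sum.neutral simp: mat_delete_def tridiag_mat_def)
  finally have det_B: "det ?B = c n * det (tridiag_mat n d c b)"
    by (simp add: cofactor_def minor) (simp add: mat_delete_def tridiag_mat_def)
  have "det ?A = (\<Sum>j<Suc (Suc n). ?A $$ (Suc n, j) * cofactor ?A (Suc n) j)"
    by (rule laplace_expansion_row) auto
  also have "\<dots> = ?A $$ (Suc n, n) * cofactor ?A (Suc n) n
      + ?A $$ (Suc n, Suc n) * cofactor ?A (Suc n) (Suc n)"
    by (simp, rule sum.neutral) (auto simp: tridiag_mat_def)
  finally show ?thesis
    by (simp add: cofactor_def mat_delete_tridiag_mat_last det_B) (simp add: tridiag_mat_def)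
qed

fun jacobi_poly :: "(nat \<Rightarrow> 'a::comm_ring_1) \<Rightarrow> (nat \<Rightarrow> 'a) \<Rightarrow> nat \<Rightarrow> 'a poly" where
  "jacobi_poly d w 0 = 1"
| "jacobi_poly d w (Suc 0) = [:- d 0, 1:]"
| "jacobi_poly d w (Suc (Suc n)) =
     [:- d (Suc n), 1:] * jacobi_poly d w (Suc n) - Polynomial.smult (w n) (jacobi_poly d w n)"

lemma char_poly_tridiag_mat:
  "char_poly (tridiag_mat n d c b) = jacobi_poly d (\<lambda>i. b i * c i) n"
proof -
  have "char_poly_matrix (tridiag_mat n d c b)
      = tridiag_mat n (\<lambda>i. [:- d i, 1:]) (\<lambda>i. [:- c i:]) (\<lambda>i. [:- b i:])"
    by (rule eq_matI) (auto simp: char_poly_matrix_def tridiag_mat_def)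
  moreover have "det (tridiag_mat n (\<lambda>i. [:- d i, 1:]) (\<lambda>i. [:- c i:]) (\<lambda>i. [:- b i:]))
      = jacobi_poly d (\<lambda>i. b i * c i) n"
  proof (induction n rule: induct_nat_012)
    case 0
    show ?case by (simp add: tridiag_mat_def det_def)
  next
    case 1
    show ?case by (subst det_single) (auto simp: tridiag_mat_def)
  next
    case (ge2 n)
    then show ?case by (simp add: det_tridiag_mat_Suc_Suc mult.commute)
  qed
  ultimately show ?thesis
    by (simp add: char_poly_def)
qed

lemma map_poly_of_real_jacobi_poly:
  "map_poly of_real (jacobi_poly d w n) = jacobi_poly (\<lambda>i. of_real (d i)) (\<lambda>i. of_real (w i)) n"
proof -
  interpret map_poly_comm_ring_hom "of_real :: real \<Rightarrow> 'a::{real_algebra_1, comm_ring_1}" ..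
  show ?thesis
    by (induction d w n rule: jacobi_poly.induct) (simp_all add: hom_distribs)
qed

section \<open>Real and simple roots\<close>

lemma poly_jacobi_poly_Suc_Suc:
  "poly (jacobi_poly d w (Suc (Suc n))) x
    = (x - d (Suc n)) * poly (jacobi_poly d w (Suc n)) x - w n * poly (jacobi_poly d w n) x"
  by (simp add: algebra_simps)

lemma poly_pderiv_jacobi_poly_Suc_Suc:
  fixes d w :: "nat \<Rightarrow> 'a::idom"
  shows "poly (pderiv (jacobi_poly d w (Suc (Suc n)))) x
    = poly (jacobi_poly d w (Suc n)) x + (x - d (Suc n)) * poly (pderiv (jacobi_poly d w (Suc n))) x
      - w n * poly (pderiv (jacobi_poly d w n)) x"
  by (simp add: pderiv_mult pderiv_diff pderiv_add pderiv_smult pderiv_pCons algebra_simps)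

lemma jacobi_poly_wronskian_pos:
  fixes d w :: "nat \<Rightarrow> real"
  assumes w_pos: "\<And>i. w i > 0"
  shows "poly (pderiv (jacobi_poly d w (Suc n))) x * poly (jacobi_poly d w n) x
    - poly (jacobi_poly d w (Suc n)) x * poly (pderiv (jacobi_poly d w n)) x > 0"
proof (induction n)
  case 0
  show ?case by (simp add: pderiv_pCons)
next
  case (Suc n)
  let ?p = "\<lambda>j. poly (jacobi_poly d w j) x" and ?p' = "\<lambda>j. poly (pderiv (jacobi_poly d w j)) x"
  have "?p' (Suc (Suc n)) * ?p (Suc n) - ?p (Suc (Suc n)) * ?p' (Suc n)
      = (?p (Suc n))\<^sup>2 + w n * (?p' (Suc n) * ?p n - ?p (Suc n) * ?p' n)"
    unfolding poly_jacobi_poly_Suc_Suc poly_pderiv_jacobi_poly_Suc_Suc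
    by (simp add: algebra_simps power2_eq_square)
  with Suc.IH w_pos[of n] show ?case
    by (simp add: add_nonneg_pos)
qed

lemma jacobi_poly_nonzero:
  fixes d w :: "nat \<Rightarrow> real"
  assumes "\<And>i. w i > 0"
  shows "jacobi_poly d w n \<noteq> 0"
proof (cases n)
  case (Suc n')
  then show ?thesis
    using jacobi_poly_wronskian_pos[of w d n' 0, OF assms] by auto
qed simp

lemma jacobi_poly_Im_cross_pos:
  fixes d w :: "nat \<Rightarrow> real"
  assumes w_pos: "\<And>i. w i > 0" and "Im z \<noteq> 0"
  shows "Im (poly (map_poly of_real (jacobi_poly d w (Suc n))) z
    * cnj (poly (map_poly of_real (jacobi_poly d w n)) z)) * Im z > 0"
proof (induction n)
  case 0
  show ?case using \<open>Im z \<noteq> 0\<close>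
    by (simp add: map_poly_of_real_jacobi_poly) (metis not_real_square_gt_zero)
next
  case (Suc n)
  define a where "a = poly (map_poly complex_of_real (jacobi_poly d w (Suc n))) z"
  define b where "b = poly (map_poly complex_of_real (jacobi_poly d w n)) z"
  have "Im (poly (map_poly of_real (jacobi_poly d w (Suc (Suc n)))) z * cnj a) * Im z
      = (Im z)\<^sup>2 * ((Re a)\<^sup>2 + (Im a)\<^sup>2) + w n * (Im (a * cnj b) * Im z)"
    unfolding a_def b_def map_poly_of_real_jacobi_poly poly_jacobi_poly_Suc_Suc
    by (simp add: algebra_simps power2_eq_square)
  with Suc.IH w_pos[of n] \<open>Im z \<noteq> 0\<close> show ?case
    unfolding a_def b_def by (simp add: add_nonneg_pos)
qed

lemma jacobi_poly_root_real:
  fixes d w :: "nat \<Rightarrow> real" and z :: complex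
  assumes "\<And>i. w i > 0" and "poly (map_poly of_real (jacobi_poly d w n)) z = 0"
  shows "Im z = 0"
proof (rule ccontr)
  assume "Im z \<noteq> 0"
  show False
  proof (cases n)
    case 0
    with assms(2) show False by simp
  next
    case (Suc n')
    with jacobi_poly_Im_cross_pos[of w z d n', OF assms(1) \<open>Im z \<noteq> 0\<close>] assms(2) show False
      by simp
  qed
qed

lemma jacobi_poly_root_simple:
  fixes d w :: "nat \<Rightarrow> real" and z :: complex
  assumes w_pos: "\<And>i. w i > 0" and root: "poly (map_poly of_real (jacobi_poly d w n)) z = 0"
  shows "order z (map_poly of_real (jacobi_poly d w n)) = 1"
proof -
  let ?q = "jacobi_poly d w n"
  have "z = of_real (Re z)"
    using jacobi_poly_root_real[OF w_pos root] by (simp add: complex_eq_iff)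
  with root have real_root: "poly ?q (Re z) = 0"
    by (metis of_real_eq_0_iff of_real_hom.poly_map_poly)
  obtain n' where "n = Suc n'"
    using root by (cases n) auto
  then have "poly (pderiv ?q) (Re z) \<noteq> 0"
    using jacobi_poly_wronskian_pos[of w d n' "Re z", OF w_pos] real_root by auto
  then have "poly (pderiv (map_poly of_real ?q)) z \<noteq> 0"
    by (subst \<open>z = of_real (Re z)\<close>) (simp flip: of_real_hom.map_poly_pderiv)
  moreover from this have "map_poly of_real ?q \<noteq> (0 :: complex poly)"
    by auto
  ultimately show ?thesis
    using order_pderiv[OF _ root] order_0I by fastforce
qed

lemma poly_roots_norm_lower_bound:
  fixes p :: "'a::real_normed_field poly"
  assumes "p \<noteq> 0" and "poly p 0 \<noteq> 0"
  shows "\<exists>e>0. \<forall>x. poly p x = 0 \<longrightarrow> e \<le> norm x"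
proof -
  let ?R = "insert 1 (norm ` {x. poly p x = 0})"
  have "finite ?R"
    using poly_roots_finite[OF \<open>p \<noteq> 0\<close>] by simp
  moreover have "\<forall>r\<in>?R. r > 0"
    using \<open>poly p 0 \<noteq> 0\<close> by force
  ultimately have "Min ?R > 0" and "\<forall>x. poly p x = 0 \<longrightarrow> Min ?R \<le> norm x"
    by auto
  then show ?thesis by blast
qed

section \<open>Antisymmetric potentials and the value at zero\<close>

locale antisymmetric_chain =
  fixes L :: "nat \<Rightarrow> real" and k \<gamma> :: real and m :: nat
  assumes k_nonzero: "k \<noteq> 0" and \<gamma>_nonzero: "\<gamma> \<noteq> 0"
    and L_antisym: "\<And>j. j < m \<Longrightarrow> L (m - 1 - j) = - L j"
begin

definition p :: "nat \<Rightarrow> real" where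
  "p n = poly (jacobi_poly (\<lambda>i. L (i div 2)) (\<lambda>i. if even i then k\<^sup>2 else \<gamma>\<^sup>2) n) 0"

definition e :: "nat \<Rightarrow> real" where
  "e j = p (2 * j)"

definition f :: "nat \<Rightarrow> real" where
  "f j = (if j = 0 then 0 else \<gamma> * p (2 * j - 1))"

lemma p_Suc_Suc:
  "p (Suc (Suc n)) = - L (Suc n div 2) * p (Suc n) - (if even n then k\<^sup>2 else \<gamma>\<^sup>2) * p n"
  unfolding p_def poly_jacobi_poly_Suc_Suc by simp

lemma p_odd: "p (Suc (2 * j)) = - L j * e j - \<gamma> * f j"
proof (cases j)
  case 0
  then show ?thesis by (simp add: p_def e_def f_def)
next
  case (Suc i)
  then show ?thesis
    using p_Suc_Suc[of "Suc (2 * i)"] by (simp add: e_def f_def power2_eq_square)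
qed

lemma e_Suc: "e (Suc j) = ((L j)\<^sup>2 - k\<^sup>2) * e j + L j * \<gamma> * f j"
proof -
  have "e (Suc j) = - L j * p (Suc (2 * j)) - k\<^sup>2 * e j"
    using p_Suc_Suc[of "2 * j"] by (simp add: e_def)
  then show ?thesis
    unfolding p_odd by (simp add: algebra_simps power2_eq_square)
qed

lemma f_Suc: "f (Suc j) = - L j * \<gamma> * e j - \<gamma>\<^sup>2 * f j"
proof -
  have "f (Suc j) = \<gamma> * p (Suc (2 * j))"
    by (simp add: f_def)
  then show ?thesis
    unfolding p_odd by (simp add: algebra_simps power2_eq_square)
qed

definition pairing :: "nat \<Rightarrow> nat \<Rightarrow> real" where
  "pairing a b = e a * e b + f a * f b"

(* By e_Suc and f_Suc, (e j, f j) is mapped to (e (j+1), f (j+1)) by the transfer matrix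
   T(L j) = ((L^2 - k^2, L gamma), (-L gamma, -gamma^2)), and T(L)^T = T(-L). *)

lemma pairing_shift:
  assumes "L a = - L b"
  shows "pairing (Suc a) b = pairing a (Suc b)"
  unfolding pairing_def e_Suc f_Suc using assms by (simp add: algebra_simps power2_eq_square)

lemma pairing_antidiagonal: "i \<le> m \<Longrightarrow> pairing (m - i) i = e m"
proof (induction i)
  case 0
  then show ?case by (simp add: pairing_def e_def f_def p_def)
next
  case (Suc i)
  then have "pairing (m - Suc i) (Suc i) = pairing (Suc (m - Suc i)) i"
    using L_antisym[of i] by (intro pairing_shift[symmetric]) (simp add: diff_diff_add)
  also have "Suc (m - Suc i) = m - i"
    using Suc.prems by simp
  finally show ?case
    using Suc by simp
qed

lemma state_nonzero: "e j \<noteq> 0 \<or> f j \<noteq> 0"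
proof (induction j)
  case 0
  then show ?case by (simp add: e_def p_def)
next
  case (Suc j)
  have "- \<gamma>\<^sup>2 * e (Suc j) - L j * \<gamma> * f (Suc j) = \<gamma>\<^sup>2 * k\<^sup>2 * e j"
    and "L j * \<gamma> * e (Suc j) + ((L j)\<^sup>2 - k\<^sup>2) * f (Suc j) = \<gamma>\<^sup>2 * k\<^sup>2 * f j"
    unfolding e_Suc f_Suc by (simp_all add: algebra_simps power2_eq_square)
  with Suc.IH k_nonzero \<gamma>_nonzero show ?case
    by auto
qed

lemma e_last_nonzero: "e m \<noteq> 0"
proof (cases "even m")
  case True
  then obtain n where "m = 2 * n" by blast
  then have "e m = (e n)\<^sup>2 + (f n)\<^sup>2"
    using pairing_antidiagonal[of n] by (simp add: pairing_def power2_eq_square)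
  then show ?thesis
    using state_nonzero[of n] by (auto simp: add_nonneg_eq_0_iff)
next
  case False
  then obtain n where m: "m = Suc (2 * n)" by (metis oddE Suc_eq_plus1)
  then have "L n = 0"
    using L_antisym[of n] by simp
  with m have "e m = - (k\<^sup>2 * (e n)\<^sup>2 + \<gamma>\<^sup>2 * (f n)\<^sup>2)"
    using pairing_antidiagonal[of n]
    by (simp add: pairing_def e_Suc f_Suc algebra_simps power2_eq_square)
  moreover have "k\<^sup>2 * (e n)\<^sup>2 + \<gamma>\<^sup>2 * (f n)\<^sup>2 > 0"
    using state_nonzero[of n] k_nonzero \<gamma>_nonzero by (auto intro: add_pos_nonneg add_nonneg_pos)
  ultimately show ?thesis
    by simp
qed

lemma jacobi_poly_at_0_nonzero:
  "poly (jacobi_poly (\<lambda>i. L (i div 2)) (\<lambda>i. if even i then k\<^sup>2 else \<gamma>\<^sup>2) (2 * m)) 0 \<noteq> 0"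
  using e_last_nonzero by (simp add: e_def p_def)

end

section \<open>The layered Hamiltonian\<close>

lemma layer_pot_antisym:
  assumes "j < m"
  shows "layer_pot m v (m - 1 - j) = - layer_pot m v j"
proof -
  have "real (m - 1 - j + 1) - (real m + 1) / 2 = - (real (j + 1) - (real m + 1) / 2)"
    using assms by (simp add: field_simps)
  then show ?thesis
    unfolding layer_pot_def by (metis mult_minus_right)
qed

lemma Hhat_eq_tridiag_mat:
  "Hhat m \<gamma> \<kappa> v = tridiag_mat (2 * m) (\<lambda>i. of_real (layer_pot m v (i div 2)))
     (\<lambda>i. if even i then cnj \<kappa> else of_real \<gamma>) (\<lambda>i. if even i then \<kappa> else of_real \<gamma>)"
    (is "_ = ?T")
proof (rule eq_matI)
  fix i j
  assume "i < dim_row ?T" and "j < dim_col ?T"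
  then have entry: "Hhat m \<gamma> \<kappa> v $$ (i, j) =
     (let b = i div 2; a = i mod 2; b' = j div 2; a' = j mod 2 in
     if b = b' then
       (if a = a' then complex_of_real (layer_pot m v b)
        else if a = 0 then cnj \<kappa> else \<kappa>)
     else if b' = b + 1 then (if a = 1 \<and> a' = 0 then complex_of_real \<gamma> else 0)
     else if b = b' + 1 then (if a = 0 \<and> a' = 1 then complex_of_real \<gamma> else 0)
     else 0)"
    "?T $$ (i, j) = (if i = j then of_real (layer_pot m v (i div 2))
       else if j = Suc i then (if even i then cnj \<kappa> else of_real \<gamma>)
       else if i = Suc j then (if even j then \<kappa> else of_real \<gamma>) else 0)"
    by (simp_all add: Hhat_def tridiag_mat_def)
  consider "j = i" | "j = Suc i" | "i = Suc j" | "j \<noteq> i" "j \<noteq> Suc i" "i \<noteq> Suc j"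
    by blast
  then show "Hhat m \<gamma> \<kappa> v $$ (i, j) = ?T $$ (i, j)"
  proof cases
    case 1
    then show ?thesis unfolding entry by simp
  next
    case 2
    then show ?thesis unfolding entry Let_def
      by (cases "even i") (simp_all add: mod2_eq_if)
  next
    case 3
    then show ?thesis unfolding entry Let_def
      by (cases "even j") (simp_all add: mod2_eq_if)
  next
    case 4
    then have "i div 2 \<noteq> j div 2" "\<not> (j div 2 = Suc (i div 2) \<and> odd i \<and> even j)"
        "\<not> (i div 2 = Suc (j div 2) \<and> even i \<and> odd j)"
      by presburger+
    with 4 show ?thesis unfolding entry Let_def by auto
  qed
qed (simp_all add: Hhat_def tridiag_mat_def)

lemma Hhat_carrier: "Hhat m \<gamma> \<kappa> v \<in> carrier_mat (2 * m) (2 * m)"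
  by (simp add: Hhat_def)

definition layer_char_poly :: "nat \<Rightarrow> real \<Rightarrow> real \<Rightarrow> real \<Rightarrow> real poly" where
  "layer_char_poly m \<gamma> k v =
     jacobi_poly (\<lambda>i. layer_pot m v (i div 2)) (\<lambda>i. if even i then k\<^sup>2 else \<gamma>\<^sup>2) (2 * m)"

lemma char_poly_Hhat:
  "char_poly (Hhat m \<gamma> \<kappa> v) = map_poly of_real (layer_char_poly m \<gamma> (cmod \<kappa>) v)"
  unfolding Hhat_eq_tridiag_mat char_poly_tridiag_mat layer_char_poly_def map_poly_of_real_jacobi_poly
  by (rule arg_cong[where f = "\<lambda>w. jacobi_poly _ w _"])
    (simp add: fun_eq_iff complex_mult_cnj cmod_power2 flip: power2_eq_square)

lemma layer_char_poly_nonzero: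
  assumes "k \<noteq> 0" and "\<gamma> \<noteq> 0"
  shows "layer_char_poly m \<gamma> k v \<noteq> 0"
  unfolding layer_char_poly_def by (rule jacobi_poly_nonzero) (simp add: assms)

lemma layer_char_poly_at_0_nonzero:
  assumes "k \<noteq> 0" and "\<gamma> \<noteq> 0"
  shows "poly (layer_char_poly m \<gamma> k v) 0 \<noteq> 0"
proof -
  interpret antisymmetric_chain "layer_pot m v" k \<gamma> m
    by unfold_locales (use assms layer_pot_antisym in auto)
  show ?thesis
    unfolding layer_char_poly_def by (rule jacobi_poly_at_0_nonzero)
qed

lemma Hhat_eigenvalue_real:
  assumes "\<kappa> \<noteq> 0" and "\<gamma> \<noteq> 0" and "eigenvalue (Hhat m \<gamma> \<kappa> v) ev"
  shows "ev = of_real (Re ev)" and "poly (layer_char_poly m \<gamma> (cmod \<kappa>) v) (Re ev) = 0"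
proof -
  have root: "poly (map_poly of_real (layer_char_poly m \<gamma> (cmod \<kappa>) v)) ev = 0"
    using assms(3) eigenvalue_root_char_poly[OF Hhat_carrier] by (simp add: char_poly_Hhat)
  then have "Im ev = 0"
    unfolding layer_char_poly_def by (rule jacobi_poly_root_real[rotated]) (simp add: assms)
  then show ev_real: "ev = of_real (Re ev)"
    by (simp add: complex_eq_iff)
  from root show "poly (layer_char_poly m \<gamma> (cmod \<kappa>) v) (Re ev) = 0"
    by (subst (asm) ev_real) (metis of_real_eq_0_iff of_real_hom.poly_map_poly)
qed

lemma Hhat_eigenvalue_simple:
  assumes "\<kappa> \<noteq> 0" and "\<gamma> \<noteq> 0" and "eigenvalue (Hhat m \<gamma> \<kappa> v) ev"
  shows "order ev (char_poly (Hhat m \<gamma> \<kappa> v)) = 1"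
proof -
  have "poly (map_poly of_real (layer_char_poly m \<gamma> (cmod \<kappa>) v)) ev = 0"
    using assms(3) eigenvalue_root_char_poly[OF Hhat_carrier] by (simp add: char_poly_Hhat)
  then show ?thesis
    unfolding char_poly_Hhat layer_char_poly_def
    by (rule jacobi_poly_root_simple[rotated]) (simp add: assms)
qed

theorem theorem2p2:
  fixes m :: nat and \<gamma> u k :: real
  assumes "m \<ge> 2" and "\<gamma> > 0" and "u > 0" and "k > 0"
  shows "\<exists>E0 > 0. \<forall>\<kappa> :: complex. cmod \<kappa> = k \<longrightarrow>
           (\<forall>H \<in> {HN m \<gamma> u \<kappa>, HS m \<gamma> u \<kappa>}.
              (\<forall>ev. eigenvalue H ev \<longrightarrow> ev \<notin> complex_of_real ` {-E0<..<E0}) \<and>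
              (\<forall>ev. eigenvalue H ev \<longrightarrow> order ev (char_poly H) = 1))"
proof -
  let ?P = "layer_char_poly m \<gamma> k u * layer_char_poly m \<gamma> k (- u)"
  have "?P \<noteq> 0" and "poly ?P 0 \<noteq> 0"
    using assms layer_char_poly_nonzero layer_char_poly_at_0_nonzero by auto
  then obtain E0 where "E0 > 0" and E0_le: "\<And>r. poly ?P r = 0 \<Longrightarrow> E0 \<le> \<bar>r\<bar>"
    using poly_roots_norm_lower_bound[of ?P] by auto
  have outside: "ev \<notin> complex_of_real ` {-E0<..<E0}"
    if "cmod \<kappa> = k" and "v \<in> {u, - u}" and "eigenvalue (Hhat m \<gamma> \<kappa> v) ev" for \<kappa> v ev
  proof -
    have "\<kappa> \<noteq> 0"
      using that(1) assms(4) by auto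
    then have "poly (layer_char_poly m \<gamma> k v) (Re ev) = 0"
      using Hhat_eigenvalue_real(2)[of \<kappa> \<gamma> m v ev] that(1,3) assms(2) by simp
    with that(2) have "E0 \<le> \<bar>Re ev\<bar>"
      using E0_le by auto
    then show ?thesis
      by auto
  qed
  have "\<forall>H \<in> {HN m \<gamma> u \<kappa>, HS m \<gamma> u \<kappa>}.
      (\<forall>ev. eigenvalue H ev \<longrightarrow> ev \<notin> complex_of_real ` {-E0<..<E0}) \<and>
      (\<forall>ev. eigenvalue H ev \<longrightarrow> order ev (char_poly H) = 1)" if "cmod \<kappa> = k" for \<kappa>
  proof -
    have "\<kappa> \<noteq> 0" and "\<gamma> \<noteq> 0"
      using that assms by auto
    then show ?thesis
      unfolding HN_def HS_def using outside[OF that] Hhat_eigenvalue_simple by blast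
  qed
  with \<open>E0 > 0\<close> show ?thesis
    by blast
qed

end
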